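(* Let $\mu$ be a finite Borel measure on $(-\pi,\pi)$ and $\mu^\#$ its symmetrization. Then \[u_{\mu^\#}(0)=\max_{[-\pi,\pi]}u_{\mu^\#}\ge\max_{[-\pi,\pi]}u_\mu,\] with equality if and only if $\mu=\mu^\#$.
   Context: A "Borel measure on $(-\pi,\pi)$" means a positive, non-zero measure on the Borel sets of $(-\pi,\pi)$; $\lambda$ is Lebesgue measure. $G(x,y)=-\frac{xy}{2\pi}-\frac12|x-y|+\frac{\pi}{2}$ on $[-\pi,\pi]^2$, and $u_\mu(x)=\int_{-\pi}^{\pi}G(x,y)\,d\mu(y)$ (the unique absolutely continuous solution of $-u''=\mu$ in distributions on $(-\pi,\pi)$ with $u(\pm\pi)=0$). Every finite Borel measure decomposes uniquely as $\mu=\nu+\sigma+\delta$ with $d\nu=f\,d\lambda$, $0\le f\in L^1[-\pi,\pi]$, $\sigma\perp\lambda$ atomless, $\delta$ purely discontinuous (a countable sum of nonnegative point masses). Symmetric decreasing rearrangement: $f^*(t)=\inf\{s:\lambda(\{f>s\})\le t\}$ for $t\in(0,2\pi)$ (with $f^*(0)=\operatorname{ess\,sup} f$, $f^*(2\pi)=\operatorname{ess\,inf}f$) and $f^\#(t)=f^*(2|t|)$ on $[-\pi,\pi]$. Symmetrization: $d\mu^\#=f^\#\,d\lambda+M\,d\delta_0$ with $M=\sigma((-\pi,\pi))+\delta((-\pi,\pi))$. *)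

theory Defs
  imports "HOL-Analysis.Analysis"
begin

definition G :: "real \<Rightarrow> real \<Rightarrow> real" where
  "G x y = - (x * y) / (2 * pi) - \<bar>x - y\<bar> / 2 + pi / 2"

definition u :: "real measure \<Rightarrow> real \<Rightarrow> real" where
  "u \<mu> x = (LINT y|\<mu>. G x y)"

definition finite_borel_measure_on_interval :: "real measure \<Rightarrow> bool" where
  "finite_borel_measure_on_interval \<mu> \<longleftrightarrow>
     sets \<mu> = sets borel \<and> emeasure \<mu> UNIV < \<infinity> \<and> emeasure \<mu> UNIV \<noteq> 0 \<and>
     emeasure \<mu> (UNIV - {-pi<..<pi}) = 0"

text \<open>Lebesgue decomposition mu = f d lambda + s, with s singular w.r.t. lambda
  (s = sigma + delta, the singular continuous plus purely discontinuous parts).\<close>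
definition lebesgue_decomp :: "real measure \<Rightarrow> (real \<Rightarrow> real) \<Rightarrow> real measure \<Rightarrow> bool" where
  "lebesgue_decomp \<mu> f s \<longleftrightarrow>
     f \<in> borel_measurable borel \<and> (\<forall>x. 0 \<le> f x) \<and>
     sets s = sets borel \<and>
     (\<exists>N\<in>sets borel. emeasure lborel N = 0 \<and> emeasure s (UNIV - N) = 0) \<and>
     (\<forall>A\<in>sets borel. emeasure \<mu> A = (\<integral>\<^sup>+x\<in>A. ennreal (f x) \<partial>lborel) + emeasure s A)"

definition decr_rearr :: "(real \<Rightarrow> real) \<Rightarrow> real \<Rightarrow> real" where
  "decr_rearr f t = Inf {s. measure lborel {x \<in> {-pi<..<pi}. f x > s} \<le> t}"

definition sym_rearr :: "(real \<Rightarrow> real) \<Rightarrow> real \<Rightarrow> real" where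
  "sym_rearr f t = (if t \<in> {-pi<..<pi} then decr_rearr f (2 * \<bar>t\<bar>) else 0)"

text \<open>Symmetrization: d mu# = f# d lambda + M d delta_0, M = singular mass of mu.\<close>
definition symmetrization :: "real measure \<Rightarrow> real measure" where
  "symmetrization \<mu> =
     (let (f, s) = (SOME (f, s). lebesgue_decomp \<mu> f s)
      in measure_of UNIV (sets borel)
           (\<lambda>A. (\<integral>\<^sup>+x\<in>A. ennreal (sym_rearr f x) \<partial>lborel)
                + emeasure s {-pi<..<pi} * indicator A 0))"

end

theory Submission
  imports Defs "HOL-Probability.Giry_Monad"
begin

(* Write mu = f dx + s with s singular.  For fixed x the kernel G(x,.) is a tent on [-pi,pi]
   with peak G(x,x) = (pi^2 - x^2)/(2 pi), whose superlevel set {G(x,.) > t} has length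
   2 pi (1 - t/G(x,x)).  By the layer-cake formula the integral of G(x,.) over a set of
   measure m is at most G(x,x) K(m), where K(m) is the mass that the tent of height one puts
   on a centred interval of length m; integrating over the superlevel sets of f and bounding
   the singular part by its total mass gives u_mu(x) <= G(x,x) Phi, with Phi depending only on
   the distribution function of f and on the singular mass.  Both are the same for mu#, and for
   mu# at x = 0 every estimate is an equality, because the superlevel sets of f# are centred
   intervals and the singular part of mu# sits at 0.  Since G(x,x) < pi/2 = G(0,0) for x <> 0,
   equality in the theorem forces the maximum of u_mu to be attained at 0 with all estimates
   sharp there; the strict bathtub principle then makes almost every superlevel set of f a
   centred interval up to a null set, so f = f# a.e., and the singular part is a point mass
   at 0. *)

section \<open>Measure-theoretic preliminaries\<close>

lemma nn_integral_add_measures: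
  assumes sets: "sets \<nu> = sets M" "sets \<nu>\<^sub>1 = sets M" "sets \<nu>\<^sub>2 = sets M"
    and add: "\<And>A. A \<in> sets M \<Longrightarrow> emeasure \<nu> A = emeasure \<nu>\<^sub>1 A + emeasure \<nu>\<^sub>2 A"
    and g: "g \<in> borel_measurable M"
  shows "(\<integral>\<^sup>+x. g x \<partial>\<nu>) = (\<integral>\<^sup>+x. g x \<partial>\<nu>\<^sub>1) + (\<integral>\<^sup>+x. g x \<partial>\<nu>\<^sub>2)"
  using g
proof (induction rule: borel_measurable_induct)
  case (cong f g)
  have "space \<nu> = space M" "space \<nu>\<^sub>1 = space M" "space \<nu>\<^sub>2 = space M"
    using sets by (auto dest: sets_eq_imp_space_eq)
  with cong show ?case by (metis nn_integral_cong)
next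
  case (set A)
  then show ?case using add[OF set] sets by simp
next
  case (mult u c)
  then have "u \<in> borel_measurable \<nu>" "u \<in> borel_measurable \<nu>\<^sub>1" "u \<in> borel_measurable \<nu>\<^sub>2"
    using sets by (simp_all cong: measurable_cong_sets)
  with mult show ?case by (simp add: nn_integral_cmult distrib_left)
next
  case (add u v)
  then have "u \<in> borel_measurable N" "v \<in> borel_measurable N" if "sets N = sets M" for N
    using that by (simp_all cong: measurable_cong_sets)
  with add sets show ?case by (simp add: nn_integral_add ac_simps)
next
  case (seq U)
  then have U: "\<And>i. U i \<in> borel_measurable N" if "sets N = sets M" for N
    using that by (simp cong: measurable_cong_sets)
  have SUP: "(\<integral>\<^sup>+x. (SUP i. U i) x \<partial>N) = (SUP i. \<integral>\<^sup>+x. U i x \<partial>N)" if "sets N = sets M" for N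
    unfolding SUP_apply by (rule nn_integral_monotone_convergence_SUP[OF \<open>incseq U\<close> U[OF that]])
  have "(SUP i. (\<integral>\<^sup>+x. U i x \<partial>\<nu>\<^sub>1) + (\<integral>\<^sup>+x. U i x \<partial>\<nu>\<^sub>2)) =
      (SUP i. \<integral>\<^sup>+x. U i x \<partial>\<nu>\<^sub>1) + (SUP i. \<integral>\<^sup>+x. U i x \<partial>\<nu>\<^sub>2)"
    by (rule ennreal_SUP_add)
      (use seq U sets in \<open>auto simp: incseq_def le_fun_def intro!: nn_integral_mono\<close>)
  then show ?case
    unfolding SUP[OF sets(1)] SUP[OF sets(2)] SUP[OF sets(3)] seq.IH .
qed

lemma nn_integral_density_add_measure:
  assumes sets: "sets \<nu> = sets M" "sets s = sets M"
    and F: "F \<in> borel_measurable M"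
    and add: "\<And>A. A \<in> sets M \<Longrightarrow> emeasure \<nu> A = (\<integral>\<^sup>+x\<in>A. F x \<partial>M) + emeasure s A"
    and g: "g \<in> borel_measurable M"
  shows "(\<integral>\<^sup>+x. g x \<partial>\<nu>) = (\<integral>\<^sup>+x. F x * g x \<partial>M) + (\<integral>\<^sup>+x. g x \<partial>s)"
  using nn_integral_add_measures[OF sets(1) _ sets(2), of "density M F"] add F g
  by (simp add: emeasure_density nn_integral_density)

lemma emeasure_measure_of_add:
  assumes sets: "sets \<nu>\<^sub>1 = sets M" "sets \<nu>\<^sub>2 = sets M"
    and \<phi>: "\<And>A. A \<in> sets M \<Longrightarrow> \<phi> A = emeasure \<nu>\<^sub>1 A + emeasure \<nu>\<^sub>2 A"
    and A: "A \<in> sets M"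
  shows "emeasure (measure_of (space M) (sets M) \<phi>) A = \<phi> A"
proof (rule emeasure_measure_of_sigma)
  show "sigma_algebra (space M) (sets M)" by (rule sets.sigma_algebra_axioms)
  show "positive (sets M) \<phi>" unfolding positive_def using \<phi> by simp
  show "countably_additive (sets M) \<phi>" unfolding countably_additive_def
  proof (intro allI impI)
    fix F :: "nat \<Rightarrow> 'a set"
    assume F: "range F \<subseteq> sets M" "disjoint_family F" "\<Union> (range F) \<in> sets M"
    have "(\<Sum>i. \<phi> (F i)) = (\<Sum>i. emeasure \<nu>\<^sub>1 (F i)) + (\<Sum>i. emeasure \<nu>\<^sub>2 (F i))"
      using F(1) \<phi> by (auto simp: suminf_add[OF summableI summableI])
    also have "\<dots> = \<phi> (\<Union> (range F))"
      using F sets \<phi> by (simp add: suminf_emeasure)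
    finally show "(\<Sum>i. \<phi> (F i)) = \<phi> (\<Union> (range F))" .
  qed
qed (use A in auto)

lemma nn_integral_layer_cake:
  fixes F :: "real \<Rightarrow> real" and w :: "real \<Rightarrow> ennreal"
  assumes [measurable]: "F \<in> borel_measurable borel" "w \<in> borel_measurable borel"
  shows "(\<integral>\<^sup>+y. ennreal (F y) * w y \<partial>lborel) =
    (\<integral>\<^sup>+t. indicator {0..} t * (\<integral>\<^sup>+y. indicator {y. t < F y} y * w y \<partial>lborel) \<partial>lborel)"
proof -
  have ennreal_F: "ennreal (F y) = (\<integral>\<^sup>+t. indicator {0..<F y} t \<partial>lborel)" for y
    by (cases "0 \<le> F y") (auto simp: ennreal_neg)
  have "(\<integral>\<^sup>+y. ennreal (F y) * w y \<partial>lborel) =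
      (\<integral>\<^sup>+y. (\<integral>\<^sup>+t. indicator {0..<F y} t * w y \<partial>lborel) \<partial>lborel)"
    by (subst ennreal_F, subst nn_integral_multc) auto
  also have "\<dots> = (\<integral>\<^sup>+t. (\<integral>\<^sup>+y. indicator {0..<F y} t * w y \<partial>lborel) \<partial>lborel)"
  proof (rule lborel_pair.Fubini'[symmetric])
    have "(\<lambda>(y, t). indicator {0..<F y} t * w y) =
        (\<lambda>p. indicator {p. 0 \<le> snd p \<and> snd p < F (fst p)} p * w (fst p))"
      by (auto simp: fun_eq_iff indicator_def)
    then show "case_prod (\<lambda>y t. indicator {0..<F y} t * w y) \<in> borel_measurable (lborel \<Otimes>\<^sub>M lborel)"
      by simp measurable
  qed
  also have "\<dots> = (\<integral>\<^sup>+t. indicator {0..} t * (\<integral>\<^sup>+y. indicator {y. t < F y} y * w y \<partial>lborel) \<partial>lborel)"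
  proof (rule nn_integral_cong)
    fix t :: real
    have "(\<lambda>y. indicator {0..<F y} t * w y) = (\<lambda>y. indicator {0..} t * (indicator {y. t < F y} y * w y))"
      by (auto simp: fun_eq_iff indicator_def)
    then show "(\<integral>\<^sup>+y. indicator {0..<F y} t * w y \<partial>lborel) =
        indicator {0..} t * (\<integral>\<^sup>+y. indicator {y. t < F y} y * w y \<partial>lborel)"
      by (simp add: nn_integral_cmult)
  qed
  finally show ?thesis .
qed

(* By Fubini, the integral of (a - b)^+ over S is the integral in t of the measure of
   {y \<in> S. t < a y} - {y. t < b y}. *)
lemma AE_le_if_null_superlevel_differences:
  fixes a b :: "real \<Rightarrow> real"
  assumes [measurable]: "a \<in> borel_measurable borel" "b \<in> borel_measurable borel" "S \<in> sets borel"
    and null: "AE t in lborel. emeasure lborel ({y \<in> S. t < a y} - {y. t < b y}) = 0"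
  shows "AE y in lborel. y \<in> S \<longrightarrow> a y \<le> b y"
proof -
  have ennreal_diff: "ennreal (a y - b y) = (\<integral>\<^sup>+t. indicator {b y..<a y} t \<partial>lborel)" for y
    by (cases "b y \<le> a y") (auto simp: ennreal_neg)
  have "(\<integral>\<^sup>+y. indicator S y * ennreal (a y - b y) \<partial>lborel) =
      (\<integral>\<^sup>+y. (\<integral>\<^sup>+t. indicator S y * indicator {b y..<a y} t \<partial>lborel) \<partial>lborel)"
    by (subst ennreal_diff, subst nn_integral_cmult) auto
  also have "\<dots> = (\<integral>\<^sup>+t. (\<integral>\<^sup>+y. indicator S y * indicator {b y..<a y} t \<partial>lborel) \<partial>lborel)"
  proof (rule lborel_pair.Fubini'[symmetric])
    have "(\<lambda>(y, t). indicator S y * indicator {b y..<a y} t) =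
        (\<lambda>p. indicator {p. fst p \<in> S \<and> b (fst p) \<le> snd p \<and> snd p < a (fst p)} p :: ennreal)"
      by (auto simp: fun_eq_iff indicator_def)
    then show "case_prod (\<lambda>y t. indicator S y * indicator {b y..<a y} t :: ennreal)
        \<in> borel_measurable (lborel \<Otimes>\<^sub>M lborel)"
      by simp measurable
  qed
  also have "\<dots> = (\<integral>\<^sup>+t. emeasure lborel ({y \<in> S. t < a y} - {y. t < b y}) \<partial>lborel)"
  proof (rule nn_integral_cong)
    fix t
    have "(\<lambda>y. indicator S y * indicator {b y..<a y} t :: ennreal) =
        indicator ({y \<in> S. t < a y} - {y. t < b y})"
      by (auto simp: fun_eq_iff indicator_def not_less)
    then show "(\<integral>\<^sup>+y. indicator S y * indicator {b y..<a y} t \<partial>lborel) =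
        emeasure lborel ({y \<in> S. t < a y} - {y. t < b y})"
      by simp
  qed
  also have "\<dots> = 0"
    using nn_integral_cong_AE[OF null] by simp
  finally have "AE y in lborel. indicator S y * ennreal (a y - b y) = 0"
    by (subst (asm) nn_integral_0_iff_AE) auto
  then show ?thesis by eventually_elim (auto simp: indicator_def ennreal_eq_0_iff)
qed

lemma ennreal_add_eq_add_leD:
  fixes a b c d :: ennreal
  assumes "a \<le> c" "b \<le> d" "a + b = c + d" "c + d < \<infinity>"
  shows "a = c" "b = d"
proof -
  have *: "x = z" if "x \<le> z" "y \<le> w" "x + y = z + w" "z + w < \<infinity>" for x y z w :: ennreal
    using that by (metis add.commute add.right_neutral add_strict_mono ennreal_add_left_cancel
        order.asym order_le_imp_less_or_eq)
  show "a = c" using *[OF assms] .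
  show "b = d" using *[of b d a c] assms by (simp add: add.commute)
qed

lemma AE_eq_if_nn_integral_le:
  assumes [measurable]: "f \<in> borel_measurable M" "g \<in> borel_measurable M"
    and le: "AE x in M. f x \<le> g x" and integral_le: "(\<integral>\<^sup>+x. g x \<partial>M) \<le> (\<integral>\<^sup>+x. f x \<partial>M)"
    and finite: "(\<integral>\<^sup>+x. f x \<partial>M) \<noteq> \<infinity>"
  shows "AE x in M. f x = g x"
proof -
  have "AE x in M. g x \<le> f x"
  proof (rule ccontr)
    assume "\<not> (AE x in M. g x \<le> f x)"
    then have "(\<integral>\<^sup>+x. f x \<partial>M) < (\<integral>\<^sup>+x. g x \<partial>M)" by (intro nn_integral_less le finite) auto
    with integral_le show False by simp
  qed
  with le show ?thesis by eventually_elim (rule antisym)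
qed

lemma mult_emeasure_less_set_nn_integral:
  assumes [measurable]: "R \<in> sets M" "w \<in> borel_measurable M"
    and R: "emeasure M R \<noteq> 0" "emeasure M R \<noteq> \<infinity>" and c: "c < \<infinity>"
    and less: "\<And>y. y \<in> R \<Longrightarrow> c < w y"
  shows "c * emeasure M R < (\<integral>\<^sup>+y\<in>R. w y \<partial>M)"
proof -
  have "(\<integral>\<^sup>+y\<in>R. c \<partial>M) < (\<integral>\<^sup>+y\<in>R. w y \<partial>M)"
  proof (rule nn_integral_less)
    show "(\<integral>\<^sup>+y\<in>R. c \<partial>M) \<noteq> \<infinity>" using R c by (simp add: nn_integral_cmult_indicator ennreal_mult_eq_top_iff)
    show "AE y in M. c * indicator R y \<le> w y * indicator R y"
      using less by (auto simp: indicator_def less_imp_le)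
    show "\<not> (AE y in M. w y * indicator R y \<le> c * indicator R y)"
    proof
      assume "AE y in M. w y * indicator R y \<le> c * indicator R y"
      then have "AE y in M. y \<notin> R"
      proof eventually_elim
        case (elim y)
        show ?case
        proof
          assume "y \<in> R"
          with elim have "w y \<le> c" by simp
          with less[OF \<open>y \<in> R\<close>] show False by (simp add: leD)
        qed
      qed
      then have "R \<in> null_sets M" by (simp add: AE_iff_null_sets)
      with R(1) show False by auto
    qed
  qed auto
  then show ?thesis by (simp add: nn_integral_cmult_indicator)
qed

lemma emeasure_Diff_swap:
  assumes [measurable]: "E \<in> sets M" "B \<in> sets M"
    and same: "emeasure M E = emeasure M B" and finite: "emeasure M B < \<infinity>"
  shows "emeasure M (E - B) = emeasure M (B - E)"
proof -
  have "emeasure M (E \<inter> B) + emeasure M (E - B) = emeasure M E"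
    by (subst plus_emeasure) (auto intro!: arg_cong[where f = "emeasure M"])
  moreover have "emeasure M (E \<inter> B) + emeasure M (B - E) = emeasure M B"
    by (subst plus_emeasure) (auto intro!: arg_cong[where f = "emeasure M"])
  ultimately have "emeasure M (E \<inter> B) + emeasure M (E - B) = emeasure M (E \<inter> B) + emeasure M (B - E)"
    using same by simp
  moreover have "emeasure M (E \<inter> B) < \<infinity>"
    using emeasure_mono[of "E \<inter> B" B M] finite by (simp add: le_less_trans)
  ultimately show ?thesis by (auto simp: ennreal_add_left_cancel)
qed

lemma bathtub_equality:
  fixes w :: "'a \<Rightarrow> ennreal"
  assumes sets [measurable]: "E \<in> sets M" "B \<in> sets M" and [measurable]: "w \<in> borel_measurable M"
    and same: "emeasure M E = emeasure M B" and finite: "emeasure M B < \<infinity>"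
    and c: "c < \<infinity>" "\<And>y. y \<notin> B \<Longrightarrow> w y \<le> c" "\<And>y. y \<in> B \<Longrightarrow> c < w y"
    and finite_integral: "(\<integral>\<^sup>+y\<in>B. w y \<partial>M) < \<infinity>"
    and eq: "(\<integral>\<^sup>+y\<in>E. w y \<partial>M) = (\<integral>\<^sup>+y\<in>B. w y \<partial>M)"
  shows "emeasure M (B - E) = 0" "emeasure M (E - B) = 0"
proof -
  have same_measure: "emeasure M (E - B) = emeasure M (B - E)"
    using same finite by (rule emeasure_Diff_swap[rotated 2]) auto
  have split: "(\<integral>\<^sup>+y\<in>X. w y \<partial>M) = (\<integral>\<^sup>+y\<in>X \<inter> Y. w y \<partial>M) + (\<integral>\<^sup>+y\<in>X - Y. w y \<partial>M)"
    if [measurable]: "X \<in> sets M" "Y \<in> sets M" for X Y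
    using nn_integral_disjoint_pair[of w M "X \<inter> Y" "X - Y"] by (auto simp: Int_Diff_Un)
  have common_finite: "(\<integral>\<^sup>+y\<in>E \<inter> B. w y \<partial>M) < \<infinity>"
    using split[OF sets(2,1)] finite_integral by (simp add: Int_commute)
  have outside_B: "(\<integral>\<^sup>+y\<in>E - B. w y \<partial>M) \<le> c * emeasure M (E - B)"
  proof -
    have "(\<integral>\<^sup>+y\<in>E - B. w y \<partial>M) \<le> (\<integral>\<^sup>+y\<in>E - B. c \<partial>M)"
      by (intro nn_integral_mono) (auto simp: indicator_def c)
    then show ?thesis by (simp add: nn_integral_cmult_indicator)
  qed
  have "emeasure M (B - E) = 0"
  proof (rule ccontr)
    assume "emeasure M (B - E) \<noteq> 0"
    moreover have "emeasure M (B - E) \<noteq> \<infinity>"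
      using emeasure_mono[of "B - E" B M] finite by (auto simp: top_unique)
    ultimately have less: "c * emeasure M (B - E) < (\<integral>\<^sup>+y\<in>B - E. w y \<partial>M)"
      by (intro mult_emeasure_less_set_nn_integral c) auto
    have "(\<integral>\<^sup>+y\<in>E. w y \<partial>M) \<le> (\<integral>\<^sup>+y\<in>E \<inter> B. w y \<partial>M) + c * emeasure M (B - E)"
      unfolding split[OF sets] same_measure[symmetric] using outside_B by (rule add_left_mono)
    also have "\<dots> < (\<integral>\<^sup>+y\<in>E \<inter> B. w y \<partial>M) + (\<integral>\<^sup>+y\<in>B - E. w y \<partial>M)"
      using less common_finite by (simp add: ennreal_add_left_cancel_less)
    also have "\<dots> = (\<integral>\<^sup>+y\<in>B. w y \<partial>M)" using split[OF sets(2,1)] by (simp add: Int_commute)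
    finally show False using eq by simp
  qed
  with same_measure show "emeasure M (B - E) = 0" "emeasure M (E - B) = 0" by auto
qed

(* N is a Lebesgue-null set of maximal mu-measure, the union of a maximizing sequence. *)
lemma lborel_null_set_carrying_singular_part:
  fixes \<mu> :: "real measure"
  assumes sets: "sets \<mu> = sets borel" and finite: "emeasure \<mu> UNIV < \<infinity>"
  obtains N where "N \<in> null_sets lborel" "\<And>A. A \<in> null_sets lborel \<Longrightarrow> emeasure \<mu> (A - N) = 0"
proof -
  have finite_A: "emeasure \<mu> A \<noteq> \<infinity>" for A
    using emeasure_mono[of A UNIV \<mu>] finite sets by (auto simp: top_unique)
  have "null_sets lborel \<noteq> {}" using null_sets.empty_sets by blast
  from ennreal_SUP_countable_SUP[OF this, of "emeasure \<mu>"] obtain g :: "nat \<Rightarrow> ennreal"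
    where g: "range g \<subseteq> emeasure \<mu> ` null_sets lborel" "Sup (emeasure \<mu> ` null_sets lborel) = Sup (range g)"
    by (elim exE conjE)
  have "\<forall>n. \<exists>N. N \<in> null_sets lborel \<and> emeasure \<mu> N = g n"
    using g(1) by (metis image_iff range_subsetD)
  then obtain Ns where Ns: "\<And>n. Ns n \<in> null_sets lborel" "\<And>n. emeasure \<mu> (Ns n) = g n"
    by metis
  define N where "N = (\<Union>n. Ns n)"
  have N: "N \<in> null_sets lborel" unfolding N_def by (rule null_sets_UN) (rule Ns(1))
  have N_sets: "N \<in> sets \<mu>" using null_setsD2[OF N] sets by simp
  have N_max: "emeasure \<mu> A \<le> emeasure \<mu> N" if "A \<in> null_sets lborel" for A
  proof -
    have "emeasure \<mu> A \<le> Sup (emeasure \<mu> ` null_sets lborel)" using that by (rule SUP_upper)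
    also have "\<dots> = Sup (range g)" by (rule g(2))
    also have "\<dots> \<le> emeasure \<mu> N"
    proof (rule SUP_least)
      fix n
      have "Ns n \<subseteq> N" unfolding N_def by auto
      then show "g n \<le> emeasure \<mu> N" unfolding Ns(2)[symmetric]
        by (rule emeasure_mono[OF _ N_sets])
    qed
    finally show ?thesis .
  qed
  show ?thesis
  proof (rule that[OF N])
    fix A :: "real set" assume A: "A \<in> null_sets lborel"
    have "emeasure \<mu> (A - N) + emeasure \<mu> N = emeasure \<mu> (A \<union> N)"
      using null_setsD2[OF A] N_sets sets by (subst plus_emeasure) auto
    also have "\<dots> \<le> emeasure \<mu> N" using N_max[OF null_sets.Un[OF A N]] .
    finally have "emeasure \<mu> N + emeasure \<mu> (A - N) \<le> emeasure \<mu> N + 0" by (simp add: add.commute)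
    then show "emeasure \<mu> (A - N) = 0"
      using finite_A[of N] by (simp only: ennreal_add_left_cancel_le) simp
  qed
qed

lemma emeasure_density_indicator:
  assumes "A \<in> sets M" "B \<in> sets M"
  shows "emeasure (density M (indicator B)) A = emeasure M (A \<inter> B)"
proof -
  have "emeasure (density M (indicator B)) A = (\<integral>\<^sup>+x. indicator B x * indicator A x \<partial>M)"
    using assms by (intro emeasure_density) auto
  also have "\<dots> = emeasure M (A \<inter> B)"
    using assms by (simp add: indicator_inter_arith[symmetric] Int_commute)
  finally show ?thesis .
qed

lemma real_density_off_lborel_null_set:
  fixes \<mu> :: "real measure"
  assumes sets: "sets \<mu> = sets borel" and finite: "emeasure \<mu> UNIV < \<infinity>" and [measurable]: "N \<in> sets borel"
    and carrying: "\<And>A. A \<in> null_sets lborel \<Longrightarrow> emeasure \<mu> (A - N) = 0"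
  obtains f where "f \<in> borel_measurable borel" "\<And>x. 0 \<le> f x"
    "\<And>A. A \<in> sets borel \<Longrightarrow> (\<integral>\<^sup>+x\<in>A. ennreal (f x) \<partial>lborel) = emeasure \<mu> (A - N)"
proof -
  define \<nu> where "\<nu> = density \<mu> (indicator (UNIV - N))"
  have sets_\<nu>: "sets \<nu> = sets lborel" unfolding \<nu>_def using sets by simp
  have emeasure_\<nu>: "emeasure \<nu> A = emeasure \<mu> (A - N)" if "A \<in> sets borel" for A
    unfolding \<nu>_def using emeasure_density_indicator[of A \<mu> "UNIV - N"] that sets by (simp add: Diff_eq)
  have "absolutely_continuous lborel \<nu>"
    unfolding absolutely_continuous_def
  proof
    fix A :: "real set" assume "A \<in> null_sets lborel"
    then show "A \<in> null_sets \<nu>" using carrying[of A] emeasure_\<nu>[of A] sets_\<nu> by (auto simp: null_sets_def)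
  qed
  then obtain h where h [measurable]: "h \<in> borel_measurable lborel" and \<nu>_eq: "density lborel h = \<nu>"
    using sigma_finite_measure.Radon_Nikodym[OF sigma_finite_lborel _ sets_\<nu>] by auto
  have "(\<integral>\<^sup>+x. h x \<partial>lborel) = emeasure \<mu> (UNIV - N)"
    using emeasure_density[OF h, of UNIV] emeasure_\<nu>[of UNIV] \<nu>_eq by simp
  also have "\<dots> \<le> emeasure \<mu> UNIV" by (rule emeasure_mono) (use sets in auto)
  finally have "(\<integral>\<^sup>+x. h x \<partial>lborel) \<noteq> \<infinity>" using finite by (auto simp: top_unique)
  then have h_finite: "AE x in lborel. h x \<noteq> \<infinity>" by (rule nn_integral_noteq_infinite[OF h])
  show ?thesis
  proof (rule that[of "\<lambda>x. enn2real (h x)"])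
    fix A :: "real set" assume A [measurable]: "A \<in> sets borel"
    have "(\<integral>\<^sup>+x\<in>A. ennreal (enn2real (h x)) \<partial>lborel) = (\<integral>\<^sup>+x\<in>A. h x \<partial>lborel)"
      by (rule nn_integral_cong_AE) (use h_finite in \<open>eventually_elim, auto simp: less_top\<close>)
    also have "\<dots> = emeasure \<mu> (A - N)"
      using emeasure_density[OF h, of A] emeasure_\<nu>[OF A] \<nu>_eq by simp
    finally show "(\<integral>\<^sup>+x\<in>A. ennreal (enn2real (h x)) \<partial>lborel) = emeasure \<mu> (A - N)" .
  qed simp_all
qed

lemma lebesgue_decomp_exists:
  fixes \<mu> :: "real measure"
  assumes sets: "sets \<mu> = sets borel" and finite: "emeasure \<mu> UNIV < \<infinity>"
  obtains f s where "lebesgue_decomp \<mu> f s"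
proof -
  obtain N where N: "N \<in> null_sets lborel" and carrying: "\<And>A. A \<in> null_sets lborel \<Longrightarrow> emeasure \<mu> (A - N) = 0"
    using lborel_null_set_carrying_singular_part[OF sets finite] by blast
  then have [measurable]: "N \<in> sets borel" by auto
  obtain f where f: "f \<in> borel_measurable borel" "\<And>x. 0 \<le> f x"
    and density: "\<And>A. A \<in> sets borel \<Longrightarrow> (\<integral>\<^sup>+x\<in>A. ennreal (f x) \<partial>lborel) = emeasure \<mu> (A - N)"
    using real_density_off_lborel_null_set[OF sets finite _ carrying] by auto
  have singular: "emeasure (density \<mu> (indicator N)) A = emeasure \<mu> (A \<inter> N)" if "A \<in> sets borel" for A
    using emeasure_density_indicator[of A \<mu> N] that sets by simp
  have "lebesgue_decomp \<mu> f (density \<mu> (indicator N))"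
    unfolding lebesgue_decomp_def
  proof (intro conjI ballI allI f)
    show "sets (density \<mu> (indicator N)) = sets borel" using sets by simp
    show "\<exists>N'\<in>sets borel. emeasure lborel N' = 0 \<and> emeasure (density \<mu> (indicator N)) (UNIV - N') = 0"
      using N singular[of "UNIV - N"] by (intro bexI[of _ N]) (auto simp: Int_commute)
    fix A :: "real set" assume A [measurable]: "A \<in> sets borel"
    have "emeasure \<mu> A = emeasure \<mu> (A - N) + emeasure \<mu> (A \<inter> N)"
      by (subst plus_emeasure) (use A sets in \<open>auto simp: Un_Diff_Int\<close>)
    then show "emeasure \<mu> A = (\<integral>\<^sup>+x\<in>A. ennreal (f x) \<partial>lborel) + emeasure (density \<mu> (indicator N)) A"
      using density[OF A] singular[OF A] by simp
  qed
  then show ?thesis by (rule that)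
qed

section \<open>The Green function\<close>

lemma G_eq_min: "G x y = min ((pi - x) * (y + pi)) ((pi + x) * (pi - y)) / (2 * pi)"
proof -
  have diff: "(pi + x) * (pi - y) - (pi - x) * (y + pi) = 2 * pi * (x - y)"
    by (simp add: algebra_simps)
  show ?thesis
  proof (cases "y \<le> x")
    case True
    then have "min ((pi - x) * (y + pi)) ((pi + x) * (pi - y)) = (pi - x) * (y + pi)"
      using diff by (intro min_absorb1) (simp add: algebra_simps)
    with True show ?thesis unfolding G_def by (simp add: field_simps)
  next
    case False
    then have "min ((pi - x) * (y + pi)) ((pi + x) * (pi - y)) = (pi + x) * (pi - y)"
      using diff by (intro min_absorb2) (simp add: algebra_simps mult_nonneg_nonpos)
    with False show ?thesis unfolding G_def by (simp add: field_simps)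
  qed
qed

lemma G_measurable [measurable]: "G x \<in> borel_measurable borel"
  unfolding G_def by measurable

lemma G_diag: "G x x = (pi - x) * (pi + x) / (2 * pi)"
  unfolding G_def by (simp add: field_simps)

lemma G_zero_left: "G 0 y = (pi - \<bar>y\<bar>) / 2"
  unfolding G_def by simp

lemma G_boundary:
  assumes "\<bar>y\<bar> \<le> pi"
  shows "G pi y = 0" "G (-pi) y = 0"
proof -
  have "0 \<le> (pi + pi) * (pi - y)" "0 \<le> (pi + pi) * (y + pi)" using assms by auto
  then show "G pi y = 0" "G (-pi) y = 0" unfolding G_eq_min by (simp_all add: min_def)
qed

lemma G_nonneg: "\<bar>x\<bar> \<le> pi \<Longrightarrow> \<bar>y\<bar> \<le> pi \<Longrightarrow> 0 \<le> G x y"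
  unfolding G_eq_min by (auto intro!: divide_nonneg_pos mult_nonneg_nonneg)

lemma G_le_diag:
  assumes "\<bar>x\<bar> \<le> pi"
  shows "G x y \<le> G x x"
proof -
  have "min ((pi - x) * (y + pi)) ((pi + x) * (pi - y)) \<le> (pi - x) * (pi + x)"
  proof (cases "y \<le> x")
    case True
    then have "(pi - x) * (y + pi) \<le> (pi - x) * (x + pi)" using assms by (intro mult_left_mono) auto
    then show ?thesis by (simp add: algebra_simps min.coboundedI1)
  next
    case False
    then have "(pi + x) * (pi - y) \<le> (pi + x) * (pi - x)" using assms by (intro mult_left_mono) auto
    then show ?thesis by (simp add: algebra_simps min.coboundedI2)
  qed
  then show ?thesis unfolding G_diag G_eq_min[of x y] by (intro divide_right_mono) auto
qed

lemma G_diag_le: "G x x \<le> G 0 0"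
  unfolding G_def by (simp add: field_simps)

lemma G_diag_less:
  assumes "x \<noteq> 0"
  shows "G x x < G 0 0"
proof -
  have "0 < x * x" using assms by (metis not_real_square_gt_zero)
  then show ?thesis unfolding G_def by (simp add: field_simps)
qed

lemma G_lipschitz:
  assumes "\<bar>y\<bar> \<le> pi"
  shows "\<bar>G x y - G x' y\<bar> \<le> \<bar>x - x'\<bar>"
proof -
  define a where "a = (x - x') * y / (2 * pi)"
  define b where "b = \<bar>x - y\<bar> - \<bar>x' - y\<bar>"
  have "G x y - G x' y = - a - b / 2"
    unfolding G_def a_def b_def by (simp add: field_simps)
  moreover have "\<bar>a\<bar> \<le> \<bar>x - x'\<bar> / 2"
  proof -
    have "\<bar>x - x'\<bar> * \<bar>y\<bar> \<le> \<bar>x - x'\<bar> * pi" using assms by (intro mult_left_mono) auto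
    then have "\<bar>x - x'\<bar> * \<bar>y\<bar> / (2 * pi) \<le> \<bar>x - x'\<bar> * pi / (2 * pi)"
      by (intro divide_right_mono) auto
    then show ?thesis unfolding a_def by (simp add: abs_mult)
  qed
  moreover have "\<bar>b\<bar> \<le> \<bar>x - x'\<bar>" unfolding b_def by linarith
  ultimately show ?thesis by (auto simp: abs_le_iff)
qed

lemma emeasure_Ioo: "emeasure lborel {a<..<b::real} = ennreal (b - a)"
  by (cases "a \<le> b") (auto simp: ennreal_neg)

lemma G_superlevel:
  assumes "\<bar>x\<bar> < pi"
  shows "{y. t < G x y} = {2 * pi * t / (pi - x) - pi <..< pi - 2 * pi * t / (pi + x)}"
proof -
  have pos: "0 < pi - x" "0 < pi + x" using assms by auto
  have "t < G x y \<longleftrightarrow> 2 * pi * t < (pi - x) * (y + pi) \<and> 2 * pi * t < (pi + x) * (pi - y)" for y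
    unfolding G_eq_min by (simp add: pos_less_divide_eq mult.commute)
  moreover have "2 * pi * t < (pi - x) * (y + pi) \<longleftrightarrow> 2 * pi * t / (pi - x) - pi < y" for y
  proof -
    have "2 * pi * t / (pi - x) < y + pi \<longleftrightarrow> 2 * pi * t < (y + pi) * (pi - x)"
      by (rule pos_divide_less_eq[OF pos(1)])
    moreover have "2 * pi * t / (pi - x) - pi < y \<longleftrightarrow> 2 * pi * t / (pi - x) < y + pi" by linarith
    ultimately show ?thesis by (simp add: mult.commute)
  qed
  moreover have "2 * pi * t < (pi + x) * (pi - y) \<longleftrightarrow> y < pi - 2 * pi * t / (pi + x)" for y
  proof -
    have "2 * pi * t / (pi + x) < pi - y \<longleftrightarrow> 2 * pi * t < (pi - y) * (pi + x)"
      by (rule pos_divide_less_eq[OF pos(2)])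
    moreover have "y < pi - 2 * pi * t / (pi + x) \<longleftrightarrow> 2 * pi * t / (pi + x) < pi - y" by linarith
    ultimately show ?thesis by (simp add: mult.commute)
  qed
  ultimately show ?thesis by auto
qed

lemma emeasure_G_superlevel:
  assumes "\<bar>x\<bar> < pi"
  shows "emeasure lborel {y. t < G x y} = ennreal (2 * pi * (1 - t / G x x))"
proof -
  have pos: "0 < pi - x" "0 < pi + x" using assms by auto
  have "pi - 2 * pi * t / (pi + x) - (2 * pi * t / (pi - x) - pi) =
      2 * pi - 2 * pi * t * (1 / (pi + x) + 1 / (pi - x))"
    by (simp add: algebra_simps)
  also have "1 / (pi + x) + 1 / (pi - x) = 2 * pi / ((pi - x) * (pi + x))"
    using pos by (simp add: field_simps)
  also have "2 * pi - 2 * pi * t * (2 * pi / ((pi - x) * (pi + x))) = 2 * pi * (1 - t / G x x)"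
    unfolding G_diag using pos by (simp add: field_simps)
  finally show ?thesis unfolding G_superlevel[OF assms] emeasure_Ioo by simp
qed

section \<open>Distribution function and symmetric rearrangement\<close>

abbreviation Ipi :: "real set" where
  "Ipi \<equiv> {-pi<..<pi}"

definition level_measure :: "(real \<Rightarrow> real) \<Rightarrow> real \<Rightarrow> real" where
  "level_measure f t = measure lborel {x \<in> Ipi. f x > t}"

lemma emeasure_subset_Ipi:
  assumes "A \<subseteq> Ipi"
  shows "emeasure lborel A = ennreal (measure lborel A)" "measure lborel A \<le> 2 * pi"
proof -
  have le: "emeasure lborel A \<le> ennreal (2 * pi)"
    using emeasure_mono[of A Ipi lborel] assms by simp
  then show eq: "emeasure lborel A = ennreal (measure lborel A)"
    by (intro emeasure_eq_ennreal_measure) (auto simp: top_unique)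
  show "measure lborel A \<le> 2 * pi" using le unfolding eq by simp
qed

lemma emeasure_superlevel_Ipi: "emeasure lborel {x \<in> Ipi. f x > t} = ennreal (level_measure f t)"
  unfolding level_measure_def by (rule emeasure_subset_Ipi) auto

lemma level_measure_le: "level_measure f t \<le> 2 * pi"
  and level_measure_nonneg: "0 \<le> level_measure f t"
  unfolding level_measure_def by (rule emeasure_subset_Ipi) auto

lemma level_measure_antimono:
  assumes [measurable]: "f \<in> borel_measurable borel" and "t \<le> t'"
  shows "level_measure f t' \<le> level_measure f t"
proof -
  have "emeasure lborel {x \<in> Ipi. f x > t'} \<le> emeasure lborel {x \<in> Ipi. f x > t}"
    by (rule emeasure_mono) (use assms in auto)
  then show ?thesis unfolding emeasure_superlevel_Ipi by (simp add: level_measure_nonneg)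
qed

lemma level_measure_measurable [measurable]:
  assumes [measurable]: "f \<in> borel_measurable borel"
  shows "level_measure f \<in> borel_measurable borel"
proof -
  have "mono (\<lambda>t. - level_measure f t)" by (auto simp: mono_def intro: level_measure_antimono)
  then have "(\<lambda>t. - (- level_measure f t)) \<in> borel_measurable borel"
    by (intro borel_measurable_uminus borel_measurable_mono)
  then show ?thesis by simp
qed

lemma level_measure_neg:
  assumes "\<And>x. 0 \<le> f x" "t < 0"
  shows "level_measure f t = 2 * pi"
proof -
  have "{x \<in> Ipi. f x > t} = Ipi" using assms by (auto intro: less_le_trans)
  then show ?thesis unfolding level_measure_def by simp
qed

lemma level_measure_less_at_nat:
  assumes [measurable]: "f \<in> borel_measurable borel" and "0 < m"
  obtains n :: nat where "level_measure f (real n) < m"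
proof -
  let ?A = "\<lambda>n::nat. {x \<in> Ipi. f x > real n}"
  have "(\<lambda>n. emeasure lborel (?A n)) \<longlonglongrightarrow> emeasure lborel (\<Inter>n. ?A n)"
  proof (rule Lim_emeasure_decseq)
    show "emeasure lborel (?A n) \<noteq> \<infinity>" for n by (simp only: emeasure_superlevel_Ipi) simp
  qed (auto simp: decseq_def)
  moreover have "(\<Inter>n. ?A n) = {}"
  proof safe
    fix x assume "x \<in> (\<Inter>n. ?A n)"
    moreover obtain n :: nat where "f x < real n" using reals_Archimedean2 by blast
    ultimately show "x \<in> {}" by (metis (mono_tags, lifting) INT_E UNIV_I mem_Collect_eq not_less_iff_gr_or_eq)
  qed
  ultimately have "(\<lambda>n. emeasure lborel (?A n)) \<longlonglongrightarrow> 0" by simp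
  then have "eventually (\<lambda>n. emeasure lborel (?A n) < ennreal m) sequentially"
    by (rule order_tendstoD) (use assms in simp)
  then obtain n where "emeasure lborel (?A n) < ennreal m" by (auto dest: eventually_happens)
  then show ?thesis
    using that ennreal_less_iff[OF level_measure_nonneg] unfolding emeasure_superlevel_Ipi by blast
qed

lemma level_measure_greater_right:
  assumes [measurable]: "f \<in> borel_measurable borel" and "m < level_measure f t" "0 \<le> m"
  obtains t' where "t < t'" "m < level_measure f t'"
proof -
  let ?A = "\<lambda>n::nat. {x \<in> Ipi. f x > t + 1 / Suc n}"
  have "(\<lambda>n. emeasure lborel (?A n)) \<longlonglongrightarrow> emeasure lborel (\<Union>n. ?A n)"
  proof (rule Lim_emeasure_incseq)
    show "incseq ?A"
    proof (rule incseq_SucI, safe)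
      fix n x assume "x \<in> Ipi" "t + 1 / real (Suc n) < f x"
      moreover have "1 / real (Suc (Suc n)) \<le> 1 / real (Suc n)" by (simp add: frac_le)
      ultimately show "t + 1 / real (Suc (Suc n)) < f x" by linarith
    qed
  qed auto
  moreover have "(\<Union>n. ?A n) = {x \<in> Ipi. f x > t}"
  proof safe
    fix x assume "x \<in> Ipi" "t < f x"
    then obtain n where "inverse (real (Suc n)) < f x - t" using reals_Archimedean[of "f x - t"] by auto
    then show "x \<in> (\<Union>n. ?A n)" using \<open>x \<in> Ipi\<close> by (auto simp: field_simps intro!: exI[of _ n])
  next
    fix x n assume "t + 1 / real (Suc n) < f x"
    moreover have "0 < 1 / real (Suc n)" by simp
    ultimately show "t < f x" by linarith
  qed
  ultimately have "(\<lambda>n. emeasure lborel (?A n)) \<longlonglongrightarrow> ennreal (level_measure f t)"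
    by (simp only: emeasure_superlevel_Ipi)
  then have "eventually (\<lambda>n. ennreal m < emeasure lborel (?A n)) sequentially"
    by (rule order_tendstoD) (use assms in \<open>simp add: ennreal_less_iff\<close>)
  then obtain n where "ennreal m < emeasure lborel (?A n)" by (auto dest: eventually_happens)
  then have "m < level_measure f (t + 1 / Suc n)"
    unfolding emeasure_superlevel_Ipi using assms by (simp add: ennreal_less_iff)
  then show ?thesis by (rule that[rotated]) simp
qed

lemma bdd_below_level_measure_le:
  assumes "\<And>x. 0 \<le> f x" "m < 2 * pi"
  shows "bdd_below {t. level_measure f t \<le> m}"
proof (rule bdd_belowI)
  fix t assume "t \<in> {t. level_measure f t \<le> m}"
  then show "0 \<le> t" using level_measure_neg[OF assms(1), of t] assms(2) by force
qed

lemma less_decr_rearr_iff: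
  assumes f [measurable]: "f \<in> borel_measurable borel" and nonneg: "\<And>x. 0 \<le> f x"
    and m: "0 < m" "m < 2 * pi"
  shows "t < decr_rearr f m \<longleftrightarrow> m < level_measure f t"
proof -
  let ?S = "{t. level_measure f t \<le> m}"
  have decr_rearr_eq: "decr_rearr f m = Inf ?S"
    unfolding decr_rearr_def level_measure_def ..
  have bdd: "bdd_below ?S" using nonneg m(2) by (rule bdd_below_level_measure_le)
  obtain n :: nat where "level_measure f (real n) < m"
    using level_measure_less_at_nat[OF f m(1)] .
  then have nonempty: "?S \<noteq> {}" by (auto intro!: exI[of _ "real n"])
  show ?thesis
  proof
    assume "t < decr_rearr f m"
    then show "m < level_measure f t"
      using cInf_lower[OF _ bdd, of t] unfolding decr_rearr_eq by (meson mem_Collect_eq not_le leD)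
  next
    assume "m < level_measure f t"
    then obtain t' where t': "t < t'" "m < level_measure f t'"
      using level_measure_greater_right[OF f _ less_imp_le[OF m(1)]] by blast
    have "t' \<le> Inf ?S"
    proof (rule cInf_greatest[OF nonempty])
      fix r assume "r \<in> ?S"
      then show "t' \<le> r" using t'(2) level_measure_antimono[OF f, of r t'] by fastforce
    qed
    then show "t < decr_rearr f m" using decr_rearr_eq t' by simp
  qed
qed

(* sym_rearr f 0 = decr_rearr f 0 is the essential supremum of f, or an unspecified value if f
   is essentially unbounded; sym_rearr0 replaces it by 0, which only changes a null set. *)
definition sym_rearr0 :: "(real \<Rightarrow> real) \<Rightarrow> real \<Rightarrow> real" where
  "sym_rearr0 f y = (if y \<in> Ipi \<and> y \<noteq> 0 then decr_rearr f (2 * \<bar>y\<bar>) else 0)"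

lemma sym_rearr_eq_sym_rearr0: "y \<noteq> 0 \<Longrightarrow> sym_rearr f y = sym_rearr0 f y"
  unfolding sym_rearr_def sym_rearr0_def by auto

lemma sym_rearr0_outside: "y \<notin> Ipi \<Longrightarrow> sym_rearr0 f y = 0"
  unfolding sym_rearr0_def by auto

context
  fixes f :: "real \<Rightarrow> real"
  assumes f [measurable]: "f \<in> borel_measurable borel" and nonneg: "\<And>x. 0 \<le> f x"
begin

lemma less_sym_rearr0_iff:
  assumes "y \<in> Ipi" "y \<noteq> 0"
  shows "t < sym_rearr0 f y \<longleftrightarrow> 2 * \<bar>y\<bar> < level_measure f t"
  using less_decr_rearr_iff[OF f nonneg, of "2 * \<bar>y\<bar>"] assms unfolding sym_rearr0_def by auto

lemma sym_rearr0_nonneg: "0 \<le> sym_rearr0 f y"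
proof (cases "y \<in> Ipi \<and> y \<noteq> 0")
  case True
  show ?thesis
  proof (rule ccontr)
    assume "\<not> 0 \<le> sym_rearr0 f y"
    then have "level_measure f (sym_rearr0 f y) = 2 * pi" by (intro level_measure_neg[OF nonneg]) simp
    then show False using less_sym_rearr0_iff[of y "sym_rearr0 f y"] True by auto
  qed
qed (auto simp: sym_rearr0_def)

lemma sym_rearr0_measurable [measurable]: "sym_rearr0 f \<in> borel_measurable borel"
proof (rule borel_measurable_iff_greater[THEN iffD2], intro allI)
  fix t
  have "{y. t < sym_rearr0 f y} =
      {y. y \<in> Ipi \<and> y \<noteq> 0 \<and> 2 * \<bar>y\<bar> < level_measure f t} \<union> {y. (y \<notin> Ipi \<or> y = 0) \<and> t < 0}"
    using less_sym_rearr0_iff by (auto simp: sym_rearr0_def)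
  also have "\<dots> \<in> sets borel" by measurable
  finally show "{y \<in> space borel. t < sym_rearr0 f y} \<in> sets borel" by simp
qed

lemma AE_superlevel_sym_rearr0:
  "AE y in lborel. (y \<in> Ipi \<and> t < sym_rearr0 f y) \<longleftrightarrow> 2 * \<bar>y\<bar> < level_measure f t"
proof (rule AE_mp[OF AE_lborel_singleton[of 0]], intro AE_I2 impI)
  fix y :: real assume "y \<noteq> 0"
  then show "(y \<in> Ipi \<and> t < sym_rearr0 f y) \<longleftrightarrow> 2 * \<bar>y\<bar> < level_measure f t"
    using less_sym_rearr0_iff[of y t] level_measure_le[of f t] by (cases "y \<in> Ipi") auto
qed

lemma level_measure_sym_rearr0: "level_measure (sym_rearr0 f) t = level_measure f t"
proof -
  have "emeasure lborel {y \<in> Ipi. sym_rearr0 f y > t} = emeasure lborel {y. 2 * \<bar>y\<bar> < level_measure f t}"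
    by (rule emeasure_eq_AE) (use AE_superlevel_sym_rearr0 in auto)
  also have "{y. 2 * \<bar>y\<bar> < level_measure f t} = {- level_measure f t / 2 <..< level_measure f t / 2}"
    by (auto simp: abs_less_iff)
  finally show ?thesis
    unfolding emeasure_Ioo emeasure_superlevel_Ipi using level_measure_nonneg by simp
qed

end

section \<open>Integrals of the kernel over superlevel sets\<close>

(* tent_mass m is the mass that the tent max 0 (1 - |y|/pi) gives to the centred interval of
   length m, written via the layer-cake formula; it bounds the mass of every set of measure m. *)
definition tent_mass :: "real \<Rightarrow> ennreal" where
  "tent_mass m = (\<integral>\<^sup>+v. indicator {0..} v * min (ennreal m) (ennreal (2 * pi * (1 - v))) \<partial>lborel)"

lemma tent_mass_measurable [measurable]: "tent_mass \<in> borel_measurable borel"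
  unfolding tent_mass_def by measurable

lemma tent_mass_scale:
  assumes "0 < h"
  shows "(\<integral>\<^sup>+t. indicator {0..} t * min (ennreal m) (ennreal (2 * pi * (1 - t / h))) \<partial>lborel) =
    ennreal h * tent_mass m"
proof -
  have "(\<lambda>v. indicator {0..} (h * v) * min (ennreal m) (ennreal (2 * pi * (1 - h * v / h)))) =
      (\<lambda>v. indicator {0..} v * min (ennreal m) (ennreal (2 * pi * (1 - v))) :: ennreal)"
    using assms by (auto simp: fun_eq_iff indicator_def zero_le_mult_iff)
  then show ?thesis
    using nn_integral_real_affine[of "\<lambda>t. indicator {0..} t * min (ennreal m) (ennreal (2 * pi * (1 - t / h)))" h 0]
      assms unfolding tent_mass_def by simp
qed

lemma nn_integral_G_le_tent_mass:
  assumes x: "\<bar>x\<bar> < pi" and [measurable]: "E \<in> sets borel" and E: "emeasure lborel E = ennreal m"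
  shows "(\<integral>\<^sup>+y. ennreal (G x y) * indicator E y \<partial>lborel) \<le> ennreal (G x x) * tent_mass m"
proof -
  have "0 < G x x" unfolding G_diag using x by (auto intro!: divide_pos_pos mult_pos_pos)
  have "(\<integral>\<^sup>+y. ennreal (G x y) * indicator E y \<partial>lborel) =
      (\<integral>\<^sup>+t. indicator {0..} t * emeasure lborel ({y. t < G x y} \<inter> E) \<partial>lborel)"
    by (simp add: nn_integral_layer_cake indicator_inter_arith[symmetric] del: Int_iff)
  also have "\<dots> \<le> (\<integral>\<^sup>+t. indicator {0..} t * min (ennreal m) (ennreal (2 * pi * (1 - t / G x x))) \<partial>lborel)"
  proof (intro nn_integral_mono mult_left_mono min.boundedI)
    fix t
    show "emeasure lborel ({y. t < G x y} \<inter> E) \<le> ennreal m"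
      unfolding E[symmetric] by (rule emeasure_mono) auto
    show "emeasure lborel ({y. t < G x y} \<inter> E) \<le> ennreal (2 * pi * (1 - t / G x x))"
      unfolding emeasure_G_superlevel[OF x, symmetric] by (rule emeasure_mono) auto
  qed simp
  also have "\<dots> = ennreal (G x x) * tent_mass m" by (rule tent_mass_scale) fact
  finally show ?thesis .
qed

lemma nn_integral_G0_centred_interval:
  assumes m: "0 \<le> m"
  shows "(\<integral>\<^sup>+y. ennreal (G 0 y) * indicator {y. 2 * \<bar>y\<bar> < m} y \<partial>lborel) = ennreal (G 0 0) * tent_mass m"
proof -
  have [measurable]: "{y. 2 * \<bar>y\<bar> < m} \<in> sets borel" by measurable
  have "(\<integral>\<^sup>+y. ennreal (G 0 y) * indicator {y. 2 * \<bar>y\<bar> < m} y \<partial>lborel) =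
      (\<integral>\<^sup>+t. indicator {0..} t * emeasure lborel ({y. t < G 0 y} \<inter> {y. 2 * \<bar>y\<bar> < m}) \<partial>lborel)"
    by (simp add: nn_integral_layer_cake indicator_inter_arith[symmetric] del: Int_iff)
  also have "\<dots> = (\<integral>\<^sup>+t. indicator {0..} t * min (ennreal m) (ennreal (2 * pi * (1 - t / G 0 0))) \<partial>lborel)"
  proof (intro nn_integral_cong arg_cong2[where f = "(*)"] refl)
    fix t :: real
    let ?r = "min (pi - 2 * t) (m / 2)"
    have "{y. t < G 0 y} \<inter> {y. 2 * \<bar>y\<bar> < m} = {- ?r <..< ?r}"
      unfolding G_zero_left by (auto simp: abs_less_iff)
    moreover have "?r - - ?r = min m (2 * (pi - 2 * t))" by (simp add: min_def)
    moreover have "2 * pi * (1 - t / G 0 0) = 2 * (pi - 2 * t)" unfolding G_zero_left by (simp add: field_simps)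
    moreover have "min (ennreal a) (ennreal b) = ennreal (min a b)" for a b :: real
      by (cases "a \<le> b") (simp_all add: ennreal_leI min_absorb1 min_absorb2)
    ultimately show "emeasure lborel ({y. t < G 0 y} \<inter> {y. 2 * \<bar>y\<bar> < m}) =
        min (ennreal m) (ennreal (2 * pi * (1 - t / G 0 0)))"
      by (simp add: emeasure_Ioo)
  qed
  also have "\<dots> = ennreal (G 0 0) * tent_mass m" by (rule tent_mass_scale) (simp add: G_zero_left)
  finally show ?thesis .
qed

definition tent_energy :: "(real \<Rightarrow> real) \<Rightarrow> ennreal" where
  "tent_energy f = (\<integral>\<^sup>+t. indicator {0..} t * tent_mass (level_measure f t) \<partial>lborel)"

definition G\<^sub>I :: "real \<Rightarrow> real \<Rightarrow> ennreal" where
  "G\<^sub>I x y = ennreal (G x y) * indicator Ipi y"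

lemma G\<^sub>I_measurable [measurable]: "G\<^sub>I x \<in> borel_measurable borel"
  unfolding G\<^sub>I_def by measurable

lemma nn_integral_G\<^sub>I_layer_cake:
  assumes [measurable]: "f \<in> borel_measurable borel"
  shows "(\<integral>\<^sup>+y. ennreal (f y) * G\<^sub>I x y \<partial>lborel) =
    (\<integral>\<^sup>+t. indicator {0..} t * (\<integral>\<^sup>+y. ennreal (G x y) * indicator {y \<in> Ipi. t < f y} y \<partial>lborel) \<partial>lborel)"
proof -
  have "indicator {y. t < f y} y * G\<^sub>I x y = ennreal (G x y) * indicator {y \<in> Ipi. t < f y} y" for t y
    by (auto simp: G\<^sub>I_def indicator_def)
  then show ?thesis by (simp add: nn_integral_layer_cake)
qed

lemma nn_integral_density_G\<^sub>I_le:
  assumes [measurable]: "f \<in> borel_measurable borel" and x: "\<bar>x\<bar> < pi"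
  shows "(\<integral>\<^sup>+y. ennreal (f y) * G\<^sub>I x y \<partial>lborel) \<le> ennreal (G x x) * tent_energy f"
proof -
  have "(\<integral>\<^sup>+y. ennreal (f y) * G\<^sub>I x y \<partial>lborel) \<le>
      (\<integral>\<^sup>+t. indicator {0..} t * (ennreal (G x x) * tent_mass (level_measure f t)) \<partial>lborel)"
    unfolding nn_integral_G\<^sub>I_layer_cake[OF assms(1)]
    by (intro nn_integral_mono mult_left_mono nn_integral_G_le_tent_mass[OF x])
      (auto simp flip: emeasure_superlevel_Ipi)
  also have "\<dots> = ennreal (G x x) * tent_energy f" unfolding tent_energy_def
    by (subst nn_integral_cmult[symmetric]) (auto simp: mult_ac)
  finally show ?thesis .
qed

lemma nn_integral_sym_rearr0_G\<^sub>I: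
  assumes f [measurable]: "f \<in> borel_measurable borel" and nonneg: "\<And>x. 0 \<le> f x"
  shows "(\<integral>\<^sup>+y. ennreal (sym_rearr0 f y) * G\<^sub>I 0 y \<partial>lborel) = ennreal (G 0 0) * tent_energy f"
proof -
  have "(\<integral>\<^sup>+y. ennreal (G 0 y) * indicator {y \<in> Ipi. t < sym_rearr0 f y} y \<partial>lborel) =
      (\<integral>\<^sup>+y. ennreal (G 0 y) * indicator {y. 2 * \<bar>y\<bar> < level_measure f t} y \<partial>lborel)" for t
    by (rule nn_integral_cong_AE)
      (use AE_superlevel_sym_rearr0[OF f nonneg, of t] in \<open>eventually_elim, auto simp: indicator_def\<close>)
  then have "(\<integral>\<^sup>+y. ennreal (sym_rearr0 f y) * G\<^sub>I 0 y \<partial>lborel) =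
      (\<integral>\<^sup>+t. indicator {0..} t * (ennreal (G 0 0) * tent_mass (level_measure f t)) \<partial>lborel)"
    unfolding nn_integral_G\<^sub>I_layer_cake[OF sym_rearr0_measurable[OF f nonneg]]
    by (simp add: nn_integral_G0_centred_interval level_measure_nonneg)
  also have "\<dots> = ennreal (G 0 0) * tent_energy f" unfolding tent_energy_def
    by (subst nn_integral_cmult[symmetric]) (auto simp: mult_ac)
  finally show ?thesis .
qed

lemma nn_integral_Ipi_layer_cake:
  assumes [measurable]: "f \<in> borel_measurable borel"
  shows "(\<integral>\<^sup>+y. ennreal (f y) * indicator Ipi y \<partial>lborel) =
    (\<integral>\<^sup>+t. indicator {0..} t * ennreal (level_measure f t) \<partial>lborel)"
proof -
  have "indicator {y. t < f y} y * indicator Ipi y = (indicator {y \<in> Ipi. t < f y} y :: ennreal)" for t y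
    by (auto simp: indicator_def)
  then show ?thesis by (simp add: nn_integral_layer_cake emeasure_superlevel_Ipi del: greaterThanLessThan_iff)
qed

lemma tent_mass_le: "tent_mass m \<le> ennreal m"
proof -
  have pointwise: "indicator {0..} v * min (ennreal m) (ennreal (2 * pi * (1 - v))) \<le>
      ennreal m * indicator {0..1} v" for v :: real
    by (cases "v \<le> 1") (auto simp: indicator_def ennreal_neg mult_nonneg_nonpos)
  have "tent_mass m \<le> (\<integral>\<^sup>+v. ennreal m * indicator {0..1::real} v \<partial>lborel)"
    unfolding tent_mass_def by (intro nn_integral_mono pointwise)
  also have "\<dots> = ennreal m" by (subst nn_integral_cmult_indicator) auto
  finally show ?thesis .
qed

lemma tent_energy_le:
  assumes "f \<in> borel_measurable borel"
  shows "tent_energy f \<le> (\<integral>\<^sup>+y\<in>Ipi. ennreal (f y) \<partial>lborel)"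
  unfolding tent_energy_def nn_integral_Ipi_layer_cake[OF assms]
  by (intro nn_integral_mono mult_left_mono tent_mass_le) auto

lemma centred_interval_unique_maximizer:
  assumes [measurable]: "E \<in> sets borel" and m: "0 \<le> m" "m \<le> 2 * pi"
    and E: "emeasure lborel E = ennreal m"
    and eq: "(\<integral>\<^sup>+y\<in>E. ennreal (G 0 y) \<partial>lborel) = (\<integral>\<^sup>+y\<in>{y. 2 * \<bar>y\<bar> < m}. ennreal (G 0 y) \<partial>lborel)"
  shows "emeasure lborel ({y. 2 * \<bar>y\<bar> < m} - E) = 0" "emeasure lborel (E - {y. 2 * \<bar>y\<bar> < m}) = 0"
proof -
  have B: "{y. 2 * \<bar>y\<bar> < m} = {-m/2<..<m/2}" by (auto simp: abs_less_iff)
  have "(\<integral>\<^sup>+y\<in>{y. 2 * \<bar>y\<bar> < m}. ennreal (G 0 y) \<partial>lborel) \<le> ennreal (G 0 0) * ennreal m"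
    unfolding nn_integral_G0_centred_interval[OF m(1)] by (intro mult_left_mono tent_mass_le) auto
  then have finite: "(\<integral>\<^sup>+y\<in>{y. 2 * \<bar>y\<bar> < m}. ennreal (G 0 y) \<partial>lborel) < \<infinity>"
    by (simp add: le_less_trans ennreal_mult_less_top flip: ennreal_mult)
  show "emeasure lborel ({y. 2 * \<bar>y\<bar> < m} - E) = 0" "emeasure lborel (E - {y. 2 * \<bar>y\<bar> < m}) = 0"
    using m E finite eq
    by (intro bathtub_equality[where c = "ennreal (G 0 (m / 2))"];
        auto simp: B emeasure_Ioo G_zero_left intro!: ennreal_leI ennreal_lessI)+
qed

section \<open>The potential of a measure carried by the interval\<close>

lemma AE_in_Ipi:
  assumes "sets \<nu> = sets borel" "emeasure \<nu> (UNIV - Ipi) = 0"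
  shows "AE y in \<nu>. y \<in> Ipi"
  using assms sets_eq_imp_space_eq[of \<nu> borel] by (intro AE_I'[of "UNIV - Ipi"]) (auto simp: null_sets_def)

lemma u_eq_nn_integral:
  assumes "sets \<nu> = sets borel" "emeasure \<nu> (UNIV - Ipi) = 0" "\<bar>x\<bar> \<le> pi"
  shows "u \<nu> x = enn2real (\<integral>\<^sup>+y. G\<^sub>I x y \<partial>\<nu>)"
proof -
  have "enn2real (\<integral>\<^sup>+y. G\<^sub>I x y \<partial>\<nu>) = (\<integral>y. G x y \<partial>\<nu>)"
  proof (rule enn2real_nn_integral_eq_integral)
    show "AE y in \<nu>. G\<^sub>I x y = ennreal (G x y)"
      using AE_in_Ipi[OF assms(1,2)] by eventually_elim (simp add: G\<^sub>I_def)
    show "AE y in \<nu>. 0 \<le> G x y"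
      using AE_in_Ipi[OF assms(1,2)] by eventually_elim (use assms in \<open>auto intro: G_nonneg\<close>)
  qed (use assms in \<open>simp_all cong: measurable_cong_sets\<close>)
  then show ?thesis unfolding u_def by simp
qed

lemma u_lipschitz:
  assumes sets: "sets \<nu> = sets borel" and finite: "emeasure \<nu> UNIV < \<infinity>"
    and outside: "emeasure \<nu> (UNIV - Ipi) = 0"
    and x: "\<bar>x\<bar> \<le> pi" and x': "\<bar>x'\<bar> \<le> pi"
  shows "u \<nu> x - u \<nu> x' \<le> \<bar>x - x'\<bar> * measure \<nu> UNIV"
proof -
  have space: "space \<nu> = UNIV" using sets_eq_imp_space_eq[OF sets] by simp
  interpret finite_measure \<nu> by (rule finite_measureI) (use finite space in auto)
  have in_Ipi: "AE y in \<nu>. y \<in> Ipi" by (rule AE_in_Ipi[OF sets outside])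
  have integrable: "integrable \<nu> (G z)" if "\<bar>z\<bar> \<le> pi" for z
  proof (rule integrable_const_bound)
    show "AE y in \<nu>. norm (G z y) \<le> G 0 0" using in_Ipi
    proof eventually_elim
      case (elim y)
      then show ?case
        using that G_nonneg[of z y] G_le_diag[of z y] G_diag_le[of z] by auto
    qed
  qed (use sets in \<open>simp cong: measurable_cong_sets\<close>)
  have "u \<nu> x - u \<nu> x' = (\<integral>y. G x y - G x' y \<partial>\<nu>)"
    unfolding u_def using integrable[OF x] integrable[OF x'] by simp
  also have "\<dots> \<le> (\<integral>y. \<bar>x - x'\<bar> \<partial>\<nu>)"
  proof (rule integral_mono_AE)
    show "AE y in \<nu>. G x y - G x' y \<le> \<bar>x - x'\<bar>" using in_Ipi
    proof eventually_elim
      case (elim y)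
      then have "\<bar>y\<bar> \<le> pi" by auto
      then show ?case using G_lipschitz[of y x x'] by simp
    qed
  qed (use integrable[OF x] integrable[OF x'] in simp_all)
  also have "\<dots> = \<bar>x - x'\<bar> * measure \<nu> UNIV" using space by simp
  finally show ?thesis .
qed

lemma u_attains_max:
  assumes "sets \<nu> = sets borel" "emeasure \<nu> UNIV < \<infinity>" "emeasure \<nu> (UNIV - Ipi) = 0"
  obtains x where "x \<in> {-pi..pi}" "\<And>y. y \<in> {-pi..pi} \<Longrightarrow> u \<nu> y \<le> u \<nu> x"
proof -
  have continuous: "continuous_on {-pi..pi} (u \<nu>)"
  proof (rule lipschitz_on_continuous_on[of "measure \<nu> UNIV"], rule lipschitz_onI)
    fix x y assume "x \<in> {-pi..pi}" "y \<in> {-pi..pi}"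
    then have "u \<nu> x - u \<nu> y \<le> \<bar>x - y\<bar> * measure \<nu> UNIV" "u \<nu> y - u \<nu> x \<le> \<bar>y - x\<bar> * measure \<nu> UNIV"
      by (auto intro!: u_lipschitz[OF assms])
    then show "dist (u \<nu> x) (u \<nu> y) \<le> measure \<nu> UNIV * dist x y"
      by (simp add: dist_real_def abs_minus_commute mult.commute abs_le_iff)
  qed simp
  show ?thesis
    using continuous_attains_sup[OF compact_Icc _ continuous] that pi_gt_zero by fastforce
qed

locale Ipi_decomposition =
  fixes \<nu> s :: "real measure" and f :: "real \<Rightarrow> real"
  assumes sets_eq: "sets \<nu> = sets borel" and sets_s: "sets s = sets borel"
    and f_measurable [measurable]: "f \<in> borel_measurable borel" and f_nonneg: "\<And>x. 0 \<le> f x"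
    and emeasure_eq: "\<And>A. A \<in> sets borel \<Longrightarrow> emeasure \<nu> A = (\<integral>\<^sup>+x\<in>A. ennreal (f x) \<partial>lborel) + emeasure s A"
    and outside: "emeasure \<nu> (UNIV - Ipi) = 0"
begin

lemma s_outside: "emeasure s (UNIV - Ipi) = 0"
  using emeasure_eq[of "UNIV - Ipi"] outside by simp

lemma nn_integral_eq:
  assumes "g \<in> borel_measurable borel"
  shows "(\<integral>\<^sup>+x. g x \<partial>\<nu>) = (\<integral>\<^sup>+x. ennreal (f x) * g x \<partial>lborel) + (\<integral>\<^sup>+x. g x \<partial>s)"
  using assms sets_eq sets_s emeasure_eq by (intro nn_integral_density_add_measure[where M = lborel]) auto

lemma nn_integral_s_G\<^sub>I_le:
  assumes "\<bar>x\<bar> \<le> pi"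
  shows "(\<integral>\<^sup>+y. G\<^sub>I x y \<partial>s) \<le> ennreal (G x x) * emeasure s Ipi"
proof -
  have "(\<integral>\<^sup>+y. G\<^sub>I x y \<partial>s) \<le> (\<integral>\<^sup>+y. ennreal (G x x) * indicator Ipi y \<partial>s)"
    by (intro nn_integral_mono) (auto simp: G\<^sub>I_def indicator_def intro!: ennreal_leI G_le_diag assms)
  also have "\<dots> = ennreal (G x x) * emeasure s Ipi"
    by (rule nn_integral_cmult_indicator) (simp add: sets_s)
  finally show ?thesis .
qed

lemma nn_integral_G\<^sub>I_le:
  assumes "\<bar>x\<bar> < pi"
  shows "(\<integral>\<^sup>+y. G\<^sub>I x y \<partial>\<nu>) \<le> ennreal (G x x) * (tent_energy f + emeasure s Ipi)"
  using add_mono[OF nn_integral_density_G\<^sub>I_le[OF f_measurable assms] nn_integral_s_G\<^sub>I_le[of x]] assms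
  by (simp add: nn_integral_eq distrib_left)

lemma u_le:
  assumes finite: "tent_energy f + emeasure s Ipi < \<infinity>" and x: "\<bar>x\<bar> \<le> pi"
  shows "u \<nu> x \<le> G x x * enn2real (tent_energy f + emeasure s Ipi)"
proof (cases "\<bar>x\<bar> = pi")
  case True
  then have "x = pi \<or> x = -pi" by auto
  then have "G\<^sub>I x = (\<lambda>y. 0)" "G x x = 0" by (auto simp: fun_eq_iff G\<^sub>I_def indicator_def G_boundary)
  then show ?thesis unfolding u_eq_nn_integral[OF sets_eq outside x] by simp
next
  case False
  then have "\<bar>x\<bar> < pi" using x by simp
  have "u \<nu> x = enn2real (\<integral>\<^sup>+y. G\<^sub>I x y \<partial>\<nu>)" by (rule u_eq_nn_integral[OF sets_eq outside x])
  also have "\<dots> \<le> enn2real (ennreal (G x x) * (tent_energy f + emeasure s Ipi))"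
    by (rule enn2real_mono[OF nn_integral_G\<^sub>I_le[OF \<open>\<bar>x\<bar> < pi\<close>]])
      (use finite in \<open>simp add: ennreal_mult_less_top\<close>)
  also have "\<dots> = G x x * enn2real (tent_energy f + emeasure s Ipi)"
    using G_nonneg[OF x x] by (simp add: enn2real_mult)
  finally show ?thesis .
qed

end

section \<open>A measure on the interval and its symmetrization\<close>

locale measure_on_Ipi =
  fixes \<mu> :: "real measure"
  assumes finite_borel: "finite_borel_measure_on_interval \<mu>"
begin

definition decomposition :: "(real \<Rightarrow> real) \<times> real measure" where
  "decomposition = (SOME (f, s). lebesgue_decomp \<mu> f s)"

definition f :: "real \<Rightarrow> real" where "f = fst decomposition"
definition s :: "real measure" where "s = snd decomposition"
definition M :: ennreal where "M = emeasure s Ipi"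
definition point_mass :: "real measure" where "point_mass = scale_measure M (return borel 0)"
definition \<Phi> :: ennreal where "\<Phi> = tent_energy f + M"

lemma sets_\<mu>: "sets \<mu> = sets borel" and finite_\<mu>: "emeasure \<mu> UNIV < \<infinity>"
  and nonzero_\<mu>: "emeasure \<mu> UNIV \<noteq> 0" and \<mu>_outside: "emeasure \<mu> (UNIV - Ipi) = 0"
  using finite_borel unfolding finite_borel_measure_on_interval_def by auto

lemma lebesgue_decomp_f_s: "lebesgue_decomp \<mu> f s"
proof -
  obtain f' s' where "lebesgue_decomp \<mu> f' s'" using lebesgue_decomp_exists[OF sets_\<mu> finite_\<mu>] .
  then have "case decomposition of (g, t) \<Rightarrow> lebesgue_decomp \<mu> g t"
    unfolding decomposition_def by (intro someI[of "case_prod (lebesgue_decomp \<mu>)" "(f', s')"]) simp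
  then show ?thesis unfolding f_def s_def by (simp add: case_prod_beta)
qed

sublocale Ipi_decomposition \<mu> s f
  using lebesgue_decomp_f_s sets_\<mu> \<mu>_outside unfolding lebesgue_decomp_def by unfold_locales auto

lemma sym_rearr0_f_measurable [measurable]: "sym_rearr0 f \<in> borel_measurable borel"
  using f_measurable f_nonneg by (rule sym_rearr0_measurable)

lemma symmetrization_eq: "symmetrization \<mu> = measure_of UNIV (sets borel)
    (\<lambda>A. (\<integral>\<^sup>+x\<in>A. ennreal (sym_rearr f x) \<partial>lborel) + M * indicator A 0)"
  unfolding symmetrization_def decomposition_def[symmetric] M_def f_def s_def
  by (simp add: Let_def case_prod_beta)

lemma sets_symmetrization: "sets (symmetrization \<mu>) = sets borel"
  unfolding symmetrization_eq using sets.sigma_sets_eq[of borel] by simp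

lemma emeasure_point_mass: "A \<in> sets borel \<Longrightarrow> emeasure point_mass A = M * indicator A 0"
  unfolding point_mass_def by simp

lemma emeasure_symmetrization:
  assumes "A \<in> sets borel"
  shows "emeasure (symmetrization \<mu>) A = (\<integral>\<^sup>+x\<in>A. ennreal (sym_rearr0 f x) \<partial>lborel) + emeasure point_mass A"
proof -
  have sym_rearr0: "(\<integral>\<^sup>+x\<in>B. ennreal (sym_rearr f x) \<partial>lborel) = (\<integral>\<^sup>+x\<in>B. ennreal (sym_rearr0 f x) \<partial>lborel)" for B
    by (rule nn_integral_cong_AE)
      (use AE_lborel_singleton[of 0] in \<open>eventually_elim, simp add: sym_rearr_eq_sym_rearr0\<close>)
  have "emeasure (measure_of (space borel) (sets borel)
      (\<lambda>A. (\<integral>\<^sup>+x\<in>A. ennreal (sym_rearr f x) \<partial>lborel) + M * indicator A 0)) A =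
      (\<integral>\<^sup>+x\<in>A. ennreal (sym_rearr f x) \<partial>lborel) + M * indicator A 0"
    by (rule emeasure_measure_of_add[where \<nu>\<^sub>1 = "density lborel (\<lambda>x. ennreal (sym_rearr0 f x))" and \<nu>\<^sub>2 = point_mass])
      (use assms in \<open>auto simp: emeasure_density sym_rearr0 emeasure_point_mass point_mass_def\<close>)
  then show ?thesis using assms by (simp add: symmetrization_eq sym_rearr0 emeasure_point_mass)
qed

sublocale sym: Ipi_decomposition "symmetrization \<mu>" point_mass "sym_rearr0 f"
proof
  have "(\<lambda>x. ennreal (sym_rearr0 f x) * indicator (UNIV - Ipi) x) = (\<lambda>x. 0)"
    by (auto simp: fun_eq_iff indicator_def sym_rearr0_def)
  then show "emeasure (symmetrization \<mu>) (UNIV - Ipi) = 0"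
    by (simp add: emeasure_symmetrization emeasure_point_mass)
qed (auto simp: sets_symmetrization point_mass_def sym_rearr0_nonneg f_nonneg emeasure_symmetrization)

lemma emeasure_point_mass_Ipi: "emeasure point_mass Ipi = M"
  by (simp add: emeasure_point_mass)

lemma tent_energy_sym_rearr0: "tent_energy (sym_rearr0 f) = tent_energy f"
  unfolding tent_energy_def level_measure_sym_rearr0[OF f_measurable f_nonneg] ..

lemma \<Phi>_finite: "\<Phi> < \<infinity>"
proof -
  have "\<Phi> \<le> (\<integral>\<^sup>+y\<in>Ipi. ennreal (f y) \<partial>lborel) + emeasure s Ipi"
    unfolding \<Phi>_def M_def by (intro add_right_mono tent_energy_le f_measurable)
  also have "\<dots> = emeasure \<mu> Ipi" by (simp add: emeasure_eq)
  also have "\<dots> \<le> emeasure \<mu> UNIV" by (rule emeasure_mono) (simp_all add: sets_\<mu>)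
  finally show ?thesis using finite_\<mu> by simp
qed

lemma u_le_\<Phi>: "\<bar>x\<bar> \<le> pi \<Longrightarrow> u \<mu> x \<le> G x x * enn2real \<Phi>"
  using u_le \<Phi>_finite unfolding \<Phi>_def M_def by simp

lemma u_symmetrization_le_\<Phi>: "\<bar>x\<bar> \<le> pi \<Longrightarrow> u (symmetrization \<mu>) x \<le> G x x * enn2real \<Phi>"
  using sym.u_le \<Phi>_finite unfolding \<Phi>_def by (simp add: tent_energy_sym_rearr0 emeasure_point_mass_Ipi)

lemma nn_integral_symmetrization_G\<^sub>I_0: "(\<integral>\<^sup>+y. G\<^sub>I 0 y \<partial>symmetrization \<mu>) = ennreal (G 0 0) * \<Phi>"
proof -
  have "(\<integral>\<^sup>+y. G\<^sub>I 0 y \<partial>symmetrization \<mu>) =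
      (\<integral>\<^sup>+y. ennreal (sym_rearr0 f y) * G\<^sub>I 0 y \<partial>lborel) + (\<integral>\<^sup>+y. G\<^sub>I 0 y \<partial>point_mass)"
    by (rule sym.nn_integral_eq) simp
  also have "\<dots> = ennreal (G 0 0) * tent_energy f + M * ennreal (G 0 0)"
    unfolding nn_integral_sym_rearr0_G\<^sub>I[OF f_measurable f_nonneg] point_mass_def
    by (simp add: nn_integral_scale_measure nn_integral_return G\<^sub>I_def)
  finally show ?thesis unfolding \<Phi>_def by (simp add: distrib_left mult.commute)
qed

lemma u_symmetrization_0: "u (symmetrization \<mu>) 0 = G 0 0 * enn2real \<Phi>"
  by (simp add: u_eq_nn_integral[OF sym.sets_eq sym.outside] nn_integral_symmetrization_G\<^sub>I_0
      enn2real_mult G_zero_left)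

lemma \<Phi>_pos: "0 < enn2real \<Phi>"
proof (rule ccontr)
  assume "\<not> 0 < enn2real \<Phi>"
  then have "\<Phi> = 0" using \<Phi>_finite enn2real_nonneg[of \<Phi>] by (auto simp: enn2real_eq_0_iff)
  then have "(\<integral>\<^sup>+y. G\<^sub>I 0 y \<partial>\<mu>) = 0" using nn_integral_G\<^sub>I_le[of 0] unfolding \<Phi>_def M_def by simp
  then have "AE y in \<mu>. G\<^sub>I 0 y = 0" by (simp add: nn_integral_0_iff_AE sets_\<mu> cong: measurable_cong_sets)
  then have "AE y in \<mu>. y \<notin> Ipi" by eventually_elim (auto simp: G\<^sub>I_def G_zero_left)
  then have "Ipi \<in> null_sets \<mu>" using AE_iff_null_sets[of Ipi \<mu>] sets_\<mu> by simp
  then have "emeasure \<mu> Ipi = 0" by auto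
  moreover have "emeasure \<mu> UNIV = emeasure \<mu> Ipi + emeasure \<mu> (UNIV - Ipi)"
    by (subst plus_emeasure) (auto simp: sets_\<mu>)
  ultimately show False using nonzero_\<mu> \<mu>_outside by simp
qed

lemma u_less_u_symmetrization_0:
  assumes "\<bar>x\<bar> \<le> pi" "x \<noteq> 0"
  shows "u \<mu> x < u (symmetrization \<mu>) 0"
  using u_le_\<Phi>[OF assms(1)] mult_strict_right_mono[OF G_diag_less[OF assms(2)] \<Phi>_pos]
  unfolding u_symmetrization_0 by simp

lemma u_symmetrization_le_0: "\<bar>x\<bar> \<le> pi \<Longrightarrow> u (symmetrization \<mu>) x \<le> u (symmetrization \<mu>) 0"
  using u_symmetrization_le_\<Phi> mult_right_mono[OF G_diag_le enn2real_nonneg]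
  unfolding u_symmetrization_0 by (blast intro: order_trans)

lemma u_le_u_symmetrization_0: "\<bar>x\<bar> \<le> pi \<Longrightarrow> u \<mu> x \<le> u (symmetrization \<mu>) 0"
  using u_le_\<Phi> mult_right_mono[OF G_diag_le enn2real_nonneg]
  unfolding u_symmetrization_0 by (blast intro: order_trans)

lemma sharp_bounds_if_u_eq:
  assumes "u \<mu> 0 = u (symmetrization \<mu>) 0"
  shows "(\<integral>\<^sup>+y. ennreal (f y) * G\<^sub>I 0 y \<partial>lborel) = ennreal (G 0 0) * tent_energy f"
    and "(\<integral>\<^sup>+y. G\<^sub>I 0 y \<partial>s) = ennreal (G 0 0) * M"
proof -
  have finite: "ennreal (G 0 0) * \<Phi> < \<infinity>" using \<Phi>_finite by (simp add: ennreal_mult_less_top)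
  have le: "(\<integral>\<^sup>+y. G\<^sub>I 0 y \<partial>\<mu>) \<le> ennreal (G 0 0) * \<Phi>"
    using nn_integral_G\<^sub>I_le[of 0] unfolding \<Phi>_def M_def by simp
  have enn2real_eq: "enn2real (\<integral>\<^sup>+y. G\<^sub>I 0 y \<partial>\<mu>) = enn2real (ennreal (G 0 0) * \<Phi>)"
    using assms by (simp add: u_eq_nn_integral[OF sets_eq outside] u_symmetrization_0 enn2real_mult G_zero_left)
  have "(\<integral>\<^sup>+y. G\<^sub>I 0 y \<partial>\<mu>) = ennreal (enn2real (\<integral>\<^sup>+y. G\<^sub>I 0 y \<partial>\<mu>))"
    using le_less_trans[OF le finite] by simp
  also have "\<dots> = ennreal (G 0 0) * \<Phi>" unfolding enn2real_eq using finite by simp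
  finally have "(\<integral>\<^sup>+y. ennreal (f y) * G\<^sub>I 0 y \<partial>lborel) + (\<integral>\<^sup>+y. G\<^sub>I 0 y \<partial>s) =
      ennreal (G 0 0) * tent_energy f + ennreal (G 0 0) * M"
    by (simp add: nn_integral_eq[symmetric] \<Phi>_def distrib_left)
  from ennreal_add_eq_add_leD[OF nn_integral_density_G\<^sub>I_le[OF f_measurable, of 0]
      nn_integral_s_G\<^sub>I_le[of 0, folded M_def] this]
  show "(\<integral>\<^sup>+y. ennreal (f y) * G\<^sub>I 0 y \<partial>lborel) = ennreal (G 0 0) * tent_energy f"
    and "(\<integral>\<^sup>+y. G\<^sub>I 0 y \<partial>s) = ennreal (G 0 0) * M"
    using finite by (simp_all add: \<Phi>_def distrib_left)
qed

lemma s_eq_point_mass_if_sharp: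
  assumes sharp: "(\<integral>\<^sup>+y. G\<^sub>I 0 y \<partial>s) = ennreal (G 0 0) * M"
  shows "s = point_mass"
proof -
  have finite: "ennreal (G 0 0) * M < \<infinity>"
    using \<Phi>_finite unfolding \<Phi>_def by (simp add: ennreal_mult_less_top)
  have "AE y in s. G\<^sub>I 0 y = ennreal (G 0 0) * indicator Ipi y"
  proof (rule AE_eq_if_nn_integral_le)
    show "AE y in s. G\<^sub>I 0 y \<le> ennreal (G 0 0) * indicator Ipi y"
      by (intro AE_I2) (auto simp: G\<^sub>I_def G_zero_left indicator_def intro!: ennreal_leI)
    show "(\<integral>\<^sup>+y. ennreal (G 0 0) * indicator Ipi y \<partial>s) \<le> (\<integral>\<^sup>+y. G\<^sub>I 0 y \<partial>s)"
      unfolding sharp M_def by (simp add: nn_integral_cmult_indicator sets_s)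
    show "(\<integral>\<^sup>+y. G\<^sub>I 0 y \<partial>s) \<noteq> \<infinity>" using finite sharp by simp
  qed (simp_all add: sets_s cong: measurable_cong_sets)
  then have at_0: "AE y in s. y = 0"
    using AE_in_Ipi[OF sets_s s_outside] by eventually_elim (auto simp: G\<^sub>I_def G_zero_left)
  have space_s: "space s = UNIV" using sets_eq_imp_space_eq[OF sets_s] by simp
  have total: "emeasure s UNIV = M"
    unfolding M_def using AE_in_Ipi[OF sets_s s_outside] by (intro emeasure_eq_AE) (auto simp: sets_s)
  show ?thesis
  proof (rule measure_eqI)
    fix A assume "A \<in> sets s"
    then have "emeasure s A = (\<integral>\<^sup>+y. indicator A y \<partial>s)" by simp
    also have "\<dots> = (\<integral>\<^sup>+y. indicator A 0 \<partial>s)"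
      by (rule nn_integral_cong_AE) (use at_0 in auto)
    also have "\<dots> = emeasure point_mass A"
      using \<open>A \<in> sets s\<close> by (simp add: space_s total emeasure_point_mass sets_s mult.commute)
    finally show "emeasure s A = emeasure point_mass A" .
  qed (simp add: sets_s point_mass_def)
qed

lemma superlevel_integrals_sharp_if_sharp:
  assumes sharp: "(\<integral>\<^sup>+y. ennreal (f y) * G\<^sub>I 0 y \<partial>lborel) = ennreal (G 0 0) * tent_energy f"
  shows "AE t in lborel. (\<integral>\<^sup>+y\<in>{y \<in> Ipi. t < f y}. ennreal (G 0 y) \<partial>lborel) =
    ennreal (G 0 0) * tent_mass (level_measure f t)"
proof -
  have le: "(\<integral>\<^sup>+y\<in>{y \<in> Ipi. t < f y}. ennreal (G 0 y) \<partial>lborel) \<le> ennreal (G 0 0) * tent_mass (level_measure f t)" for t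
    using nn_integral_G_le_tent_mass[of 0 "{y \<in> Ipi. t < f y}" "level_measure f t"]
    by (simp add: emeasure_superlevel_Ipi del: greaterThanLessThan_iff)
  have finite: "ennreal (G 0 0) * tent_energy f < \<infinity>"
    using \<Phi>_finite unfolding \<Phi>_def by (simp add: ennreal_mult_less_top)
  have "AE t in lborel. indicator {0..} t * (\<integral>\<^sup>+y\<in>{y \<in> Ipi. t < f y}. ennreal (G 0 y) \<partial>lborel) =
      indicator {0..} t * (ennreal (G 0 0) * tent_mass (level_measure f t))"
  proof (rule AE_eq_if_nn_integral_le)
    show "AE t in lborel. indicator {0..} t * (\<integral>\<^sup>+y\<in>{y \<in> Ipi. t < f y}. ennreal (G 0 y) \<partial>lborel) \<le>
        indicator {0..} t * (ennreal (G 0 0) * tent_mass (level_measure f t))"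
      using le by (intro AE_I2 mult_left_mono) auto
    have "(\<integral>\<^sup>+t. indicator {0..} t * (ennreal (G 0 0) * tent_mass (level_measure f t)) \<partial>lborel) =
        ennreal (G 0 0) * tent_energy f"
      unfolding tent_energy_def by (subst nn_integral_cmult[symmetric]) (auto simp: mult_ac)
    then show "(\<integral>\<^sup>+t. indicator {0..} t * (ennreal (G 0 0) * tent_mass (level_measure f t)) \<partial>lborel) \<le>
        (\<integral>\<^sup>+t. indicator {0..} t * (\<integral>\<^sup>+y\<in>{y \<in> Ipi. t < f y}. ennreal (G 0 y) \<partial>lborel) \<partial>lborel)"
      unfolding sharp[symmetric] nn_integral_G\<^sub>I_layer_cake[OF f_measurable] by simp
    show "(\<integral>\<^sup>+t. indicator {0..} t * (\<integral>\<^sup>+y\<in>{y \<in> Ipi. t < f y}. ennreal (G 0 y) \<partial>lborel) \<partial>lborel) \<noteq> \<infinity>"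
      using sharp finite unfolding nn_integral_G\<^sub>I_layer_cake[OF f_measurable] by simp
  qed measurable
  then show ?thesis
  proof eventually_elim
    case (elim t)
    show ?case
    proof (cases "0 \<le> t")
      case False
      then have "t < f y" for y using f_nonneg[of y] by linarith
      then have "{y \<in> Ipi. t < f y} = {y. 2 * \<bar>y\<bar> < 2 * pi}" by (auto simp: abs_less_iff)
      moreover have "level_measure f t = 2 * pi" using False by (intro level_measure_neg f_nonneg) simp
      ultimately show ?thesis using nn_integral_G0_centred_interval[of "2 * pi"] by simp
    qed (use elim in simp)
  qed
qed

lemma superlevel_differences_null_if_sharp:
  assumes sharp: "(\<integral>\<^sup>+y\<in>{y \<in> Ipi. t < f y}. ennreal (G 0 y) \<partial>lborel) =
    ennreal (G 0 0) * tent_mass (level_measure f t)"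
  shows "emeasure lborel ({y \<in> Ipi. t < f y} - {y. t < sym_rearr0 f y}) = 0"
    and "emeasure lborel ({y \<in> Ipi. t < sym_rearr0 f y} - {y. t < f y}) = 0"
proof -
  let ?E = "{y \<in> Ipi. t < f y}" and ?B = "{y. 2 * \<bar>y\<bar> < level_measure f t}"
  have "(\<integral>\<^sup>+y\<in>?E. ennreal (G 0 y) \<partial>lborel) = (\<integral>\<^sup>+y\<in>?B. ennreal (G 0 y) \<partial>lborel)"
    unfolding sharp nn_integral_G0_centred_interval[OF level_measure_nonneg] ..
  from centred_interval_unique_maximizer[OF _ level_measure_nonneg level_measure_le
      emeasure_superlevel_Ipi this]
  have null: "emeasure lborel (?B - ?E) = 0" "emeasure lborel (?E - ?B) = 0" by simp_all
  have null_up_to_0: "emeasure lborel A = 0"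
    if "A \<subseteq> D \<union> {0}" "emeasure lborel D = 0" "A \<in> sets borel" "D \<in> sets borel" for A D :: "real set"
  proof -
    have "D \<in> null_sets lborel" using that by auto
    then have "D \<union> {0} \<in> null_sets lborel" by (rule null_sets.Un) (simp add: finite_imp_null_set_lborel)
    then have "A \<in> null_sets lborel" by (rule null_sets_subset) (use that in auto)
    then show ?thesis by auto
  qed
  have sub: "?E - {y. t < sym_rearr0 f y} \<subseteq> (?E - ?B) \<union> {0}"
    "{y \<in> Ipi. t < sym_rearr0 f y} - {y. t < f y} \<subseteq> (?B - ?E) \<union> {0}"
    using less_sym_rearr0_iff[OF f_measurable f_nonneg] by auto
  show "emeasure lborel (?E - {y. t < sym_rearr0 f y}) = 0"
    by (rule null_up_to_0[OF sub(1) null(2)]; measurable)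
  show "emeasure lborel ({y \<in> Ipi. t < sym_rearr0 f y} - {y. t < f y}) = 0"
    by (rule null_up_to_0[OF sub(2) null(1)]; measurable)
qed

lemma f_eq_sym_rearr0_if_sharp:
  assumes "(\<integral>\<^sup>+y. ennreal (f y) * G\<^sub>I 0 y \<partial>lborel) = ennreal (G 0 0) * tent_energy f"
  shows "AE y in lborel. f y = sym_rearr0 f y"
proof -
  note null = superlevel_integrals_sharp_if_sharp[OF assms, THEN AE_mp, OF AE_I2,
      OF impI, OF superlevel_differences_null_if_sharp(1)]
    superlevel_integrals_sharp_if_sharp[OF assms, THEN AE_mp, OF AE_I2,
      OF impI, OF superlevel_differences_null_if_sharp(2)]
  have "AE y in lborel. y \<in> Ipi \<longrightarrow> f y \<le> sym_rearr0 f y"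
    by (rule AE_le_if_null_superlevel_differences[OF _ _ _ null(1)]) auto
  moreover have "AE y in lborel. y \<in> Ipi \<longrightarrow> sym_rearr0 f y \<le> f y"
    by (rule AE_le_if_null_superlevel_differences[OF _ _ _ null(2)]) auto
  moreover have "AE y in lborel. y \<notin> Ipi \<longrightarrow> f y = 0"
  proof -
    have "(\<integral>\<^sup>+y\<in>UNIV - Ipi. ennreal (f y) \<partial>lborel) = 0"
      using emeasure_eq[of "UNIV - Ipi"] outside by simp
    then have "AE y in lborel. ennreal (f y) * indicator (UNIV - Ipi) y = 0"
      by (simp add: nn_integral_0_iff_AE)
    then show ?thesis
      by eventually_elim (use f_nonneg in \<open>auto simp: indicator_def ennreal_eq_0_iff intro: antisym\<close>)
  qed
  ultimately show ?thesis
  proof eventually_elim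
    case (elim y)
    then show ?case using sym_rearr0_outside[of y f] by (cases "y \<in> Ipi") auto
  qed
qed

lemma eq_symmetrization_if_u_eq:
  assumes "u \<mu> 0 = u (symmetrization \<mu>) 0"
  shows "\<mu> = symmetrization \<mu>"
proof (rule measure_eqI)
  fix A assume "A \<in> sets \<mu>"
  then have A: "A \<in> sets borel" by (simp add: sets_\<mu>)
  have "(\<integral>\<^sup>+x\<in>A. ennreal (f x) \<partial>lborel) = (\<integral>\<^sup>+x\<in>A. ennreal (sym_rearr0 f x) \<partial>lborel)"
    using f_eq_sym_rearr0_if_sharp[OF sharp_bounds_if_u_eq(1)[OF assms]]
    by (intro nn_integral_cong_AE) (auto elim!: eventually_mono)
  then show "emeasure \<mu> A = emeasure (symmetrization \<mu>) A"
    unfolding emeasure_eq[OF A] emeasure_symmetrization[OF A]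
      s_eq_point_mass_if_sharp[OF sharp_bounds_if_u_eq(2)[OF assms]] by simp
qed (simp add: sets_\<mu> sets_symmetrization)

lemma eq_symmetrization_if_max_eq:
  assumes "\<bar>x\<bar> \<le> pi" "u \<mu> x = u (symmetrization \<mu>) 0"
  shows "\<mu> = symmetrization \<mu>"
  using u_less_u_symmetrization_0[OF assms(1)] eq_symmetrization_if_u_eq assms(2) by fastforce

end

theorem theorem3p11:
  fixes \<mu> :: "real measure"
  assumes "finite_borel_measure_on_interval \<mu>"
  shows "u (symmetrization \<mu>) 0 = (SUP x\<in>{-pi..pi}. u (symmetrization \<mu>) x)
    \<and> (\<forall>x\<in>{-pi..pi}. u (symmetrization \<mu>) x \<le> u (symmetrization \<mu>) 0)
    \<and> (\<exists>x\<in>{-pi..pi}. u \<mu> x = (SUP y\<in>{-pi..pi}. u \<mu> y))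
    \<and> (SUP x\<in>{-pi..pi}. u \<mu> x) \<le> u (symmetrization \<mu>) 0
    \<and> ((SUP x\<in>{-pi..pi}. u \<mu> x) = u (symmetrization \<mu>) 0 \<longleftrightarrow> \<mu> = symmetrization \<mu>)"
proof -
  interpret measure_on_Ipi \<mu> by unfold_locales (rule assms)
  have sym_max: "\<forall>x\<in>{-pi..pi}. u (symmetrization \<mu>) x \<le> u (symmetrization \<mu>) 0"
    using u_symmetrization_le_0 by auto
  then have sym_SUP: "(SUP x\<in>{-pi..pi}. u (symmetrization \<mu>) x) = u (symmetrization \<mu>) 0"
    by (intro cSup_eq_maximum) auto
  obtain x\<^sub>0 where x\<^sub>0: "x\<^sub>0 \<in> {-pi..pi}" "\<And>y. y \<in> {-pi..pi} \<Longrightarrow> u \<mu> y \<le> u \<mu> x\<^sub>0"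
    using u_attains_max[OF sets_\<mu> finite_\<mu> \<mu>_outside] by blast
  then have SUP: "(SUP y\<in>{-pi..pi}. u \<mu> y) = u \<mu> x\<^sub>0" by (intro cSup_eq_maximum) auto
  have "\<bar>x\<^sub>0\<bar> \<le> pi" using x\<^sub>0(1) by auto
  then have "u \<mu> x\<^sub>0 \<le> u (symmetrization \<mu>) 0" "u \<mu> x\<^sub>0 = u (symmetrization \<mu>) 0 \<Longrightarrow> \<mu> = symmetrization \<mu>"
    using u_le_u_symmetrization_0 eq_symmetrization_if_max_eq by auto
  moreover have "\<mu> = symmetrization \<mu> \<Longrightarrow> u \<mu> x\<^sub>0 = u (symmetrization \<mu>) 0"
    using SUP sym_SUP by simp
  ultimately show ?thesis using sym_max sym_SUP SUP x\<^sub>0(1) by auto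
qed

end
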